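(* For the toy interacting scalar field, the interacting SDR is $i_{\mathrm{int}}=$ inclusion of constants $\mathbb C[[\hbar]]\to\mathbb C[[x,\xi]][[\hbar]]$, $p_{\mathrm{int}}(O)=\langle e^{\frac{\mathrm{i}}{\hbar}P}O\rangle/\langle e^{\frac{\mathrm{i}}{\hbar}P}\rangle$ (perturbative expectation value of $O(x)$ w.r.t. $S$), $K_{\mathrm{int}}(\xi f(x))=0$, and its classical limit is $$K^{\mathrm{cl}}_{\mathrm{int}}(O)=\xi\,\frac{O(x)-O(0)}{S'(x)}=\xi\,\frac{O(x)-O(0)}{x+P'(x)}\qquad (O=O(x)\in\mathbb C[[x]]),$$ the quotient being understood as a formal power series.
   Context: Toy scalar field: $\mathcal F=\mathbb R\oplus\mathbb R[-1]$ with even coordinate $x$ (degree $0$) and odd coordinate $\xi$ (degree $-1$), $\omega=\delta x\wedge\delta\xi$, $\Delta=\partial_x\partial_\xi$, $\mathcal F'=0$, differential $d$ such that $S_0=\frac{x^2}{2}$, chain contraction $\kappa$ with $\hat\kappa=\xi\partial_x$. Action $S(x)=\frac{x^2}{2}+P(x)$ with $P(x)=\sum_{n\ge3}\frac{P_n}{n!}x^n$ a polynomial; $S'$ denotes the derivative in $x$. BV differential $Q_\hbar=S'(x)\partial_\xi-\mathrm{i}\hbar\partial_x\partial_\xi$ on $\mathbb C[[x,\xi]][[\hbar]]$. Free classical SDR: $i$ = inclusion of constants, $p$ = constant term, $K=\nu\hat\kappa$ (so $K(x^N)=x^{N-1}\xi$ for $N\ge1$, $K(1)=0$, $K(\xi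 f)=0$). $(i_{\mathrm{int}},p_{\mathrm{int}},K_{\mathrm{int}})$ is obtained by the homological perturbation lemma from $(i,p,K)$ with perturbation $\delta=P'(x)\partial_\xi-\mathrm{i}\hbar\partial_x\partial_\xi$, i.e. $K_{\mathrm{int}}=\sum_kK(-\delta K)^k$ etc. The Gaussian average $\langle F\rangle=(e^{\frac{\mathrm{i}\hbar}{2}\partial_x^2}F)|_{x=0}$. $K^{\mathrm{cl}}_{\mathrm{int}}$ denotes $K_{\mathrm{int}}$ modulo $\hbar$. *)

theory Defs
  imports "HOL-Computational_Algebra.Computational_Algebra" "HOL-Computational_Algebra.Polynomial_FPS"
begin

(* An element of C[[x,xi]][[hbar]] (xi odd, xi^2 = 0) is a + xi * b with
   a, b in C[[x,hbar]].  We represent C[[x,hbar]] as complex fps fps: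
   the outer fps variable is x, the inner one is hbar.  The pair (a, b)
   stands for a + xi * b. *)
type_synonym sfield = "complex fps fps \<times> complex fps fps"

definition xser :: "complex fps \<Rightarrow> complex fps fps" where
  "xser Ob = Abs_fps (\<lambda>n. fps_const (Ob $ n))"

definition xpoly :: "complex poly \<Rightarrow> complex fps fps" where
  "xpoly p = xser (fps_of_poly p)"

definition ihbar :: "complex fps fps" where
  "ihbar = fps_const (fps_const \<i> * fps_X)"

(* free SDR: K = nu hat kappa, p = constant term, i = inclusion of constants *)
definition Kop :: "sfield \<Rightarrow> sfield" where
  "Kop v = (0, fps_shift 1 (fst v))"

definition pop :: "sfield \<Rightarrow> complex fps" where
  "pop v = fst v $ 0"

definition iop :: "complex fps \<Rightarrow> sfield" where
  "iop c = (fps_const c, 0)"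

(* perturbation delta = P'(x) d_xi - i hbar d_x d_xi ; d_xi (a + xi b) = b *)
definition delta :: "complex poly \<Rightarrow> sfield \<Rightarrow> sfield" where
  "delta P v = (xpoly (pderiv P) * snd v - ihbar * fps_deriv (snd v), 0)"

definition mdK :: "complex poly \<Rightarrow> sfield \<Rightarrow> sfield" where
  "mdK P w = (let u = delta P (Kop w) in (- fst u, - snd u))"

definition mKd :: "complex poly \<Rightarrow> sfield \<Rightarrow> sfield" where
  "mKd P w = (let u = Kop (delta P w) in (- fst u, - snd u))"

definition summable1 :: "(nat \<Rightarrow> complex fps) \<Rightarrow> bool" where
  "summable1 a \<longleftrightarrow> (\<forall>m. finite {k. a k $ m \<noteq> 0})"

definition fsum1 :: "(nat \<Rightarrow> complex fps) \<Rightarrow> complex fps" where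
  "fsum1 a = Abs_fps (\<lambda>m. \<Sum>k | a k $ m \<noteq> 0. a k $ m)"

definition summable2 :: "(nat \<Rightarrow> complex fps fps) \<Rightarrow> bool" where
  "summable2 a \<longleftrightarrow> (\<forall>n m. finite {k. a k $ n $ m \<noteq> 0})"

definition fsum2 :: "(nat \<Rightarrow> complex fps fps) \<Rightarrow> complex fps fps" where
  "fsum2 a = Abs_fps (\<lambda>n. Abs_fps (\<lambda>m. \<Sum>k | a k $ n $ m \<noteq> 0. a k $ n $ m))"

definition sf_summable :: "(nat \<Rightarrow> sfield) \<Rightarrow> bool" where
  "sf_summable a \<longleftrightarrow> summable2 (\<lambda>k. fst (a k)) \<and> summable2 (\<lambda>k. snd (a k))"

definition sf_sum :: "(nat \<Rightarrow> sfield) \<Rightarrow> sfield" where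
  "sf_sum a = (fsum2 (\<lambda>k. fst (a k)), fsum2 (\<lambda>k. snd (a k)))"

(* homological perturbation series:
   K_int = sum_k K (-delta K)^k,  p_int = sum_k p (-delta K)^k,
   i_int = sum_k (-K delta)^k i *)
definition Kint_series :: "complex poly \<Rightarrow> sfield \<Rightarrow> nat \<Rightarrow> sfield" where
  "Kint_series P v k = Kop ((mdK P ^^ k) v)"

definition pint_series :: "complex poly \<Rightarrow> sfield \<Rightarrow> nat \<Rightarrow> complex fps" where
  "pint_series P v k = pop ((mdK P ^^ k) v)"

definition iint_series :: "complex poly \<Rightarrow> complex fps \<Rightarrow> nat \<Rightarrow> sfield" where
  "iint_series P c k = (mKd P ^^ k) (iop c)"

definition mod_hbar :: "complex fps fps \<Rightarrow> complex fps" where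
  "mod_hbar f = Abs_fps (\<lambda>n. f $ n $ 0)"

(* Gaussian average of G(x) in C[[x]]: (exp(i hbar/2 d_x^2) G)|_{x=0} as a series in hbar;
   <x^(2r)> = (i hbar/2)^r (2r)!/r! *)
definition gauss :: "complex fps \<Rightarrow> complex fps" where
  "gauss G = Abs_fps (\<lambda>r. G $ (2*r) * (\<i>/2)^r * fact (2*r) / fact r)"

(* <exp(i P/hbar) Ob> = sum_j i^j/j! hbar^(-j) <P^j Ob>, as a Laurent series in hbar:
   contribution of the j-th term to the coefficient of hbar^m (m :: int) *)
definition gexp_term :: "complex poly \<Rightarrow> complex fps \<Rightarrow> nat \<Rightarrow> int \<Rightarrow> complex" where
  "gexp_term P Ob j m = (if m + int j \<ge> 0
     then \<i>^j / fact j * (gauss (fps_of_poly P ^ j * Ob) $ nat (m + int j)) else 0)"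

definition gexp_summable :: "complex poly \<Rightarrow> complex fps \<Rightarrow> bool" where
  "gexp_summable P Ob \<longleftrightarrow> (\<forall>m. finite {j. gexp_term P Ob j m \<noteq> 0})"

definition gexp_coeff :: "complex poly \<Rightarrow> complex fps \<Rightarrow> int \<Rightarrow> complex" where
  "gexp_coeff P Ob m = (\<Sum>j | gexp_term P Ob j m \<noteq> 0. gexp_term P Ob j m)"

definition gexp_avg :: "complex poly \<Rightarrow> complex fps \<Rightarrow> complex fps" where
  "gexp_avg P Ob = Abs_fps (\<lambda>m. gexp_coeff P Ob (int m))"

end

theory Submission
  imports Defs
begin

(* Let T = mdK_even P be -\<delta>K on even elements, T a = -(P' (a/x) - i\<hbar> (a/x)').  Giving x
   weight 1 and \<hbar> weight 3, T raises the weight by one because P has order at least 3, so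
   every perturbation series is finite in each coefficient.  Modulo \<hbar>, T a = -P' (a/x), and
   the series for K_int telescopes against S' = x + P'.
   For p_int, every even a splits as a(0) + Q_\<hbar>(\<xi> a/x) + T a.  The perturbed average
   <e^(iP/\<hbar>) F>, extended \<hbar>-linearly to F depending on \<hbar>, kills Q_\<hbar>-exact terms by
   the Schwinger-Dyson equation <e^(iP/\<hbar>) S' h> = i\<hbar> <e^(iP/\<hbar>) h'>, which is
   Gaussian integration by parts.  Iterating the splitting gives
   <e^(iP/\<hbar>) O> = (\<Sum>k. (T^k O)(0)) <e^(iP/\<hbar>)>. *)

lemma fps_mult_nth_eq_0_below:
  fixes F G :: "'a::comm_semiring_0 fps"
  assumes "\<forall>k<a. F $ k = 0" "\<forall>k<b. G $ k = 0" "n < a + b"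
  shows "(F * G) $ n = 0"
  unfolding fps_mult_nth
proof (intro sum.neutral ballI)
  fix i assume "i \<in> {0..n}"
  then show "F $ i * G $ (n - i) = 0"
    using assms by (cases "i < a") auto
qed

lemma fps_power_nth_eq_0_below:
  fixes F :: "'a::comm_semiring_1 fps"
  assumes "\<forall>k<a. F $ k = 0" "n < a * j"
  shows "(F ^ j) $ n = 0"
  using assms(2)
proof (induction j arbitrary: n)
  case (Suc j)
  then show ?case
    using fps_mult_nth_eq_0_below[OF assms(1), of "j * a" "F ^ j" n] by (simp add: mult.commute)
qed simp

lemma fps_mult_nth_cong_initial:
  fixes F G B :: "'a::comm_semiring_0 fps"
  assumes "\<forall>i\<le>m. F $ i = G $ i"
  shows "(F * B) $ m = (G * B) $ m"
  unfolding fps_mult_nth by (intro sum.cong) (use assms in auto)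

lemma fps_X_mult_shift_1: "fps_X * fps_shift 1 a = a - fps_const (a $ 0 :: 'a::comm_ring_1)"
  by (rule fps_ext) (simp add: fps_X_mult_nth)

lemma fps_deriv_power_mult:
  fixes F h :: "'a::comm_ring_1 fps"
  shows "fps_deriv (F ^ j * h)
           = fps_const (of_nat j) * (F ^ (j - 1) * (fps_deriv F * h)) + F ^ j * fps_deriv h"
  by (simp add: fps_deriv_power algebra_simps)

lemma fps_shift_sum_mult_telescope:
  fixes D :: "'a::comm_ring_1 fps"
  assumes "D $ 0 = 0" and u_Suc: "\<And>k. u (Suc k) = - (D * fps_shift 1 (u k))"
  shows "(\<Sum>k\<le>N. fps_shift 1 (u k)) * (fps_X + D) = u 0 - fps_const (u 0 $ 0) - u (Suc N)"
proof -
  have step: "fps_shift 1 (u k) * (fps_X + D) = u k - fps_const (u k $ 0) - u (Suc k)" for k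
    using fps_X_mult_shift_1[of "u k"] u_Suc[of k] by (simp add: algebra_simps)
  show ?thesis
  proof (induction N)
    case (Suc N)
    have "u (Suc N) $ 0 = 0" using u_Suc[of N] assms(1) by simp
    then show ?case using Suc.IH step[of "Suc N"] by (simp add: distrib_right)
  qed (use step[of 0] in simp)
qed

lemma sum_atMost_antidiagonal_shift:
  fixes f :: "nat \<Rightarrow> nat \<Rightarrow> 'a::ab_group_add"
  shows "(\<Sum>s\<le>m. (if m - s = 0 then 0 else f s (m - s - 1))
                 - (if s = 0 then 0 else f (s - 1) (m - s))) = 0"
proof (cases m)
  case (Suc m')
  have "(\<Sum>s\<le>m. (if m - s = 0 then 0 else f s (m - s - 1))) = (\<Sum>s\<le>m'. f s (m' - s))"
    unfolding Suc by (simp add: Suc_diff_le)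
  moreover have "(\<Sum>s\<le>m. (if s = 0 then 0 else f (s - 1) (m - s))) = (\<Sum>s\<le>m'. f s (m' - s))"
    unfolding Suc by (subst sum.atMost_Suc_shift) simp
  ultimately show ?thesis by (simp add: sum_subtractf)
qed simp

lemma summable1_if_eventually_0:
  assumes "\<And>m. \<exists>N. \<forall>k\<ge>N. a k $ m = 0"
  shows "summable1 a"
  unfolding summable1_def
proof
  fix m
  obtain N where "\<forall>k\<ge>N. a k $ m = 0" using assms by blast
  then have "{k. a k $ m \<noteq> 0} \<subseteq> {..<N}" using not_le by auto
  then show "finite {k. a k $ m \<noteq> 0}" using finite_subset by blast
qed

lemma summable2_if_eventually_0:
  assumes "\<And>n m. \<exists>N. \<forall>k\<ge>N. a k $ n $ m = 0"
  shows "summable2 a"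
  unfolding summable2_def
proof (intro allI)
  fix n m
  obtain N where "\<forall>k\<ge>N. a k $ n $ m = 0" using assms by blast
  then have "{k. a k $ n $ m \<noteq> 0} \<subseteq> {..<N}" using not_le by auto
  then show "finite {k. a k $ n $ m \<noteq> 0}" using finite_subset by blast
qed

lemma fsum1_nth_eq_sum:
  assumes "\<forall>k\<ge>N. a k $ m = 0"
  shows "fsum1 a $ m = (\<Sum>k<N. a k $ m)"
  unfolding fsum1_def fps_nth_Abs_fps
  by (rule sum.mono_neutral_left) (use assms not_le in auto)

lemma fsum2_nth_eq_sum:
  assumes "\<forall>k\<ge>N. a k $ n $ m = 0"
  shows "fsum2 a $ n $ m = (\<Sum>k<N. a k $ n $ m)"
  unfolding fsum2_def fps_nth_Abs_fps
  by (rule sum.mono_neutral_left) (use assms not_le in auto)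

lemma fsum2_zero: "fsum2 (\<lambda>k. 0) = 0"
  by (simp add: fsum2_def fps_eq_iff)

lemma fsum2_eq_first:
  assumes "\<forall>k\<ge>1. a k = 0"
  shows "fsum2 a = a 0"
  using fsum2_nth_eq_sum[of 1 a] assms by (simp add: fps_eq_iff)

lemma gauss_nth [simp]: "gauss G $ r = G $ (2*r) * (\<i>/2)^r * fact (2*r) / fact r"
  by (simp add: gauss_def)

lemma gauss_add: "gauss (F + G) = gauss F + gauss G"
  by (rule fps_ext) (simp add: algebra_simps add_divide_distrib)

lemma gauss_minus: "gauss (- F) = - gauss F"
  by (rule fps_ext) simp

lemma gauss_const_mult: "gauss (fps_const c * F) = fps_const c * gauss F"
  by (rule fps_ext) simp

lemma sum_i_power_fact_shift:
  fixes g :: "nat \<Rightarrow> complex"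
  shows "\<i> * (\<Sum>j\<le>Suc K. \<i>^j / fact j * of_nat j * g j) = - (\<Sum>j\<le>K. \<i>^j / fact j * g (Suc j))"
proof -
  have summand:
    "\<i> * (\<i>^Suc j / fact (Suc j) * of_nat (Suc j) * g (Suc j)) = - (\<i>^j / fact j * g (Suc j))" for j
  proof -
    have "(fact (Suc j) :: complex) = of_nat (Suc j) * fact j" by simp
    moreover have "\<i> * \<i>^Suc j = - (\<i>^j :: complex)" by simp
    ultimately show ?thesis by (simp add: field_simps del: of_nat_Suc)
  qed
  have "\<i> * (\<Sum>j\<le>Suc K. \<i>^j / fact j * of_nat j * g j)
      = (\<Sum>j\<le>K. \<i> * (\<i>^Suc j / fact (Suc j) * of_nat (Suc j) * g (Suc j)))"
    by (subst sum.atMost_Suc_shift) (simp add: sum_distrib_left del: sum.atMost_Suc)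
  also have "\<dots> = - (\<Sum>j\<le>K. \<i>^j / fact j * g (Suc j))"
    by (simp only: summand sum_negf)
  finally show ?thesis .
qed

text \<open>Gaussian integration by parts, \<open>\<langle>x G\<rangle> = i\<hbar> \<langle>G'\<rangle>\<close>.\<close>

lemma gauss_fps_X_mult_Suc: "gauss (fps_X * G) $ Suc u = \<i> * gauss (fps_deriv G) $ u"
proof -
  have fact_2Suc: "(fact (2 * Suc u) :: complex) = 2 * of_nat (Suc u) * of_nat (2*u+1) * fact (2*u)"
  proof -
    have "2 * Suc u = Suc (Suc (2*u))" by simp
    then show ?thesis by (simp only: fact_Suc) (simp add: algebra_simps)
  qed
  have "gauss (fps_X * G) $ Suc u
      = G $ (2*u+1) * (\<i>/2)^(Suc u) * fact (2 * Suc u) / (of_nat (Suc u) * fact u)"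
    by (simp add: numeral_2_eq_2 del: of_nat_Suc)
  also have "\<dots> = \<i> * ((of_nat (2*u+1) * G $ (2*u+1)) * (\<i>/2)^u * fact (2*u) / fact u)"
    unfolding fact_2Suc by (simp add: field_simps del: of_nat_Suc of_nat_add)
  also have "\<dots> = \<i> * gauss (fps_deriv G) $ u"
    by (simp add: add.commute)
  finally show ?thesis .
qed

lemma gauss_power_mult_fps_X_mult_Suc:
  "gauss (F ^ j * (fps_X * h)) $ Suc u
     = \<i> * (of_nat j * gauss (F ^ (j - 1) * (fps_deriv F * h)) $ u + gauss (F ^ j * fps_deriv h) $ u)"
proof -
  have X_left: "F ^ j * (fps_X * h) = fps_X * (F ^ j * h)" by (simp add: algebra_simps)
  have "gauss (F ^ j * (fps_X * h)) $ Suc u = \<i> * gauss (fps_deriv (F ^ j * h)) $ u"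
    by (simp only: X_left gauss_fps_X_mult_Suc)
  then show ?thesis
    unfolding fps_deriv_power_mult by (simp add: gauss_add gauss_const_mult del: gauss_nth)
qed

definition hbar_coeff :: "complex fps fps \<Rightarrow> nat \<Rightarrow> complex fps" where
  "hbar_coeff F s = Abs_fps (\<lambda>n. F $ n $ s)"

lemma hbar_coeff_nth [simp]: "hbar_coeff F s $ n = F $ n $ s"
  by (simp add: hbar_coeff_def)

lemma hbar_coeff_add: "hbar_coeff (F + G) s = hbar_coeff F s + hbar_coeff G s"
  by (rule fps_ext) simp

lemma hbar_coeff_minus: "hbar_coeff (- F) s = - hbar_coeff F s"
  by (rule fps_ext) simp

lemma hbar_coeff_diff: "hbar_coeff (F - G) s = hbar_coeff F s - hbar_coeff G s"
  by (rule fps_ext) simp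

lemma hbar_coeff_xpoly_mult: "hbar_coeff (xpoly p * G) s = fps_of_poly p * hbar_coeff G s"
proof (rule fps_ext)
  fix n
  have "(xpoly p * G) $ n = (\<Sum>i=0..n. fps_const (coeff p i) * G $ (n - i))"
    unfolding fps_mult_nth[of "xpoly p"] by (simp add: xpoly_def xser_def)
  then have "(xpoly p * G) $ n $ s = (\<Sum>i=0..n. coeff p i * G $ (n - i) $ s)"
    by (simp add: fps_sum_nth)
  then show "hbar_coeff (xpoly p * G) s $ n = (fps_of_poly p * hbar_coeff G s) $ n"
    by (simp add: fps_mult_nth[of "fps_of_poly p"])
qed

lemma hbar_coeff_fps_X_mult: "hbar_coeff (fps_X * G) s = fps_X * hbar_coeff G s"
  by (rule fps_ext) simp

lemma hbar_coeff_ihbar_mult: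
  "hbar_coeff (ihbar * G) s = (if s = 0 then 0 else fps_const \<i> * hbar_coeff G (s - 1))"
  by (rule fps_ext) (simp add: ihbar_def mult.assoc)

lemma hbar_coeff_deriv: "hbar_coeff (fps_deriv G) s = fps_deriv (hbar_coeff G s)"
  by (rule fps_ext) (simp add: fps_of_nat[symmetric] del: of_nat_add of_nat_Suc)

lemma hbar_coeff_shift: "hbar_coeff (fps_shift 1 G) s = fps_shift 1 (hbar_coeff G s)"
  by (rule fps_ext) simp

lemma hbar_coeff_const: "hbar_coeff (fps_const c) s = fps_const (c $ s)"
  by (rule fps_ext) (simp add: fps_nth_fps_const)

lemma hbar_coeff_xser: "hbar_coeff (xser Ob) s = (if s = 0 then Ob else 0)"
  by (rule fps_ext) (simp add: xser_def fps_nth_fps_const)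

text \<open>\<open>\<langle>e^(iP/\<hbar>) F\<rangle>\<close> for \<open>F\<close> depending on \<open>\<hbar>\<close>, extended \<open>\<hbar>\<close>-linearly.\<close>

definition hbar_avg :: "complex poly \<Rightarrow> complex fps fps \<Rightarrow> complex fps" where
  "hbar_avg P F = Abs_fps (\<lambda>m. \<Sum>s\<le>m. gexp_avg P (hbar_coeff F s) $ (m - s))"

lemma hbar_avg_nth: "hbar_avg P F $ m = (\<Sum>s\<le>m. gexp_avg P (hbar_coeff F s) $ (m - s))"
  by (simp add: hbar_avg_def)

definition weight_ge :: "nat \<Rightarrow> complex fps fps \<Rightarrow> bool" where
  "weight_ge N F \<longleftrightarrow> (\<forall>n s. n + 3*s < N \<longrightarrow> F $ n $ s = 0)"

section \<open>The perturbation series\<close>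

definition mdK_even :: "complex poly \<Rightarrow> complex fps fps \<Rightarrow> complex fps fps" where
  "mdK_even P a = - (xpoly (pderiv P) * fps_shift 1 a - ihbar * fps_deriv (fps_shift 1 a))"

text \<open>\<open>Qhbar_odd P g\<close> is \<open>Q\<^sub>\<hbar> (\<xi> g)\<close>.\<close>

definition Qhbar_odd :: "complex poly \<Rightarrow> complex fps fps \<Rightarrow> complex fps fps" where
  "Qhbar_odd P g = (fps_X + xpoly (pderiv P)) * g - ihbar * fps_deriv g"

lemma mdK_eq: "mdK P w = (mdK_even P (fst w), 0)"
  by (simp add: mdK_def delta_def Kop_def mdK_even_def Let_def)

lemma fst_mdK_power: "fst ((mdK P ^^ k) v) = (mdK_even P ^^ k) (fst v)"
  by (induction k) (simp_all add: mdK_eq)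

lemma mdK_even_power_zero: "(mdK_even P ^^ k) 0 = 0"
  by (induction k) (simp_all add: mdK_even_def)

lemma even_decomposition: "a = fps_const (a $ 0) + Qhbar_odd P (fps_shift 1 a) + mdK_even P a"
proof -
  have "Qhbar_odd P (fps_shift 1 a) + mdK_even P a = fps_X * fps_shift 1 a"
    by (simp add: Qhbar_odd_def mdK_even_def algebra_simps)
  then show ?thesis by (simp only: fps_X_mult_shift_1 add.assoc) simp
qed

lemma hbar_coeff_mdK_even:
  "hbar_coeff (mdK_even P a) s = - (fps_of_poly (pderiv P) * fps_shift 1 (hbar_coeff a s)
     - (if s = 0 then 0 else fps_const \<i> * fps_deriv (fps_shift 1 (hbar_coeff a (s - 1)))))"
  by (simp only: mdK_even_def hbar_coeff_minus hbar_coeff_diff hbar_coeff_xpoly_mult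
      hbar_coeff_ihbar_mult hbar_coeff_deriv hbar_coeff_shift)

lemma iint_series_eq: "iint_series P c k = (if k = 0 then iop c else (0, 0))"
proof (induction k)
  case (Suc k)
  have "mKd P w = (0, 0)" if "snd w = 0" for w
    using that by (simp add: mKd_def delta_def Kop_def Let_def)
  then show ?case using Suc by (simp add: iint_series_def iop_def)
qed (simp add: iint_series_def)

lemma pint_series_eq: "pint_series P v k = (mdK_even P ^^ k) (fst v) $ 0"
  by (simp add: pint_series_def pop_def fst_mdK_power)

lemma Kint_series_eq: "Kint_series P v k = (0, fps_shift 1 ((mdK_even P ^^ k) (fst v)))"
  by (simp add: Kint_series_def Kop_def fst_mdK_power)

lemma iint_series_sum: "sf_summable (iint_series P c) \<and> sf_sum (iint_series P c) = iop c"
proof -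
  have "summable2 (\<lambda>k. fst (iint_series P c k))" "summable2 (\<lambda>k. snd (iint_series P c k))"
    by (rule summable2_if_eventually_0, rule exI[of _ 1], simp add: iint_series_eq)+
  moreover have "fsum2 (\<lambda>k. fst (iint_series P c k)) = fst (iop c)"
    "fsum2 (\<lambda>k. snd (iint_series P c k)) = snd (iop c)"
    by (subst fsum2_eq_first, simp_all add: iint_series_eq)+
  ultimately show ?thesis by (simp add: sf_summable_def sf_sum_def)
qed

lemma mod_hbar_fst_Kint_series_sum: "mod_hbar (fst (sf_sum (Kint_series P v))) = 0"
  by (simp add: sf_sum_def Kint_series_eq fsum2_zero mod_hbar_def fps_eq_iff)

lemma Kint_series_sum_odd: "sf_sum (Kint_series P (0, f)) = (0, 0)"
  by (simp add: sf_sum_def Kint_series_eq mdK_even_power_zero fsum2_zero)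

context
  fixes P :: "complex poly"
  assumes cubic: "\<forall>k<3. coeff P k = 0"
begin

lemma fps_of_poly_nth_eq_0_below_3: "\<forall>k<3. fps_of_poly P $ k = 0"
  using cubic by simp

lemma fps_of_poly_pderiv_nth_eq_0_below_2: "\<forall>k<2. fps_of_poly (pderiv P) $ k = 0"
  using cubic by (auto simp: coeff_pderiv)

lemma weight_ge_mdK_even:
  assumes w: "weight_ge N a"
  shows "weight_ge (Suc N) (mdK_even P a)"
  unfolding weight_ge_def
proof (intro allI impI)
  fix n s assume ns: "n + 3*s < Suc N"
  have "\<forall>k<N - 3*s - 1. fps_shift 1 (hbar_coeff a s) $ k = 0"
    using w by (auto simp: weight_ge_def)
  then have classical: "(fps_of_poly (pderiv P) * fps_shift 1 (hbar_coeff a s)) $ n = 0"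
    by (rule fps_mult_nth_eq_0_below[OF fps_of_poly_pderiv_nth_eq_0_below_2]) (use ns in arith)
  have quantum: "(if s = 0 then 0 else fps_const \<i> * fps_deriv (fps_shift 1 (hbar_coeff a (s - 1)))) $ n = 0"
  proof (cases s)
    case (Suc s')
    have "a $ (n + 2) $ s' = 0" using w ns Suc by (auto simp: weight_ge_def)
    then show ?thesis using Suc by (simp add: numeral_2_eq_2)
  qed simp
  have "mdK_even P a $ n $ s = hbar_coeff (mdK_even P a) s $ n" by simp
  also have "\<dots> = 0" unfolding hbar_coeff_mdK_even using classical quantum by simp
  finally show "mdK_even P a $ n $ s = 0" .
qed

lemma weight_ge_mdK_even_power: "weight_ge k ((mdK_even P ^^ k) a)"
  by (induction k) (simp add: weight_ge_def, simp add: weight_ge_mdK_even)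

lemma pint_series_summable: "summable1 (pint_series P v)"
proof (rule summable1_if_eventually_0)
  fix m
  show "\<exists>N. \<forall>k\<ge>N. pint_series P v k $ m = 0"
    by (rule exI[of _ "Suc (3*m)"])
      (use weight_ge_mdK_even_power in \<open>auto simp: pint_series_eq weight_ge_def\<close>)
qed

lemma Kint_series_summable: "sf_summable (Kint_series P v)"
  unfolding sf_summable_def
proof
  show "summable2 (\<lambda>k. fst (Kint_series P v k))"
    by (rule summable2_if_eventually_0) (simp add: Kint_series_eq)
  show "summable2 (\<lambda>k. snd (Kint_series P v k))"
  proof (rule summable2_if_eventually_0)
    fix n m
    show "\<exists>N. \<forall>k\<ge>N. snd (Kint_series P v k) $ n $ m = 0"
      by (rule exI[of _ "n + 2 + 3*m"])
        (use weight_ge_mdK_even_power in \<open>auto simp: Kint_series_eq weight_ge_def\<close>)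
  qed
qed

section \<open>The perturbed Gaussian average\<close>

lemma gauss_power_mult_nth_eq_0:
  assumes "\<forall>k<b. G $ k = 0" "2*u < 3*j + b"
  shows "gauss (fps_of_poly P ^ j * G) $ u = 0"
proof -
  have "\<forall>k<3*j. (fps_of_poly P ^ j) $ k = 0"
    using fps_power_nth_eq_0_below[OF fps_of_poly_nth_eq_0_below_3] by simp
  then have "(fps_of_poly P ^ j * G) $ (2*u) = 0"
    using fps_mult_nth_eq_0_below assms by blast
  then show ?thesis by simp
qed

lemma gexp_term_eq_0:
  assumes "2*m < int j"
  shows "gexp_term P G j m = 0"
  unfolding gexp_term_def using gauss_power_mult_nth_eq_0[of 0 G "nat (m + int j)" j] assms
  by auto

lemma gexp_summable_no_negative_powers:
  "gexp_summable P G \<and> (\<forall>m<0. gexp_coeff P G m = 0)"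
proof
  have support: "{j. gexp_term P G j m \<noteq> 0} \<subseteq> {j. int j \<le> 2*m}" for m
    using gexp_term_eq_0 by (force simp: not_less)
  have "finite {j. int j \<le> 2*m}" for m
    by (rule finite_subset[of _ "{..nat (2*m)}"]) auto
  then show "gexp_summable P G"
    unfolding gexp_summable_def using support finite_subset by blast
  show "\<forall>m<0. gexp_coeff P G m = 0"
  proof (intro allI impI)
    fix m :: int assume "m < 0"
    then have "{j. gexp_term P G j m \<noteq> 0} = {}" using support[of m] by auto
    then show "gexp_coeff P G m = 0" by (simp add: gexp_coeff_def)
  qed
qed

lemma gexp_avg_nth_eq_sum:
  assumes "2*t \<le> J"
  shows "gexp_avg P G $ t = (\<Sum>j\<le>J. \<i>^j / fact j * gauss (fps_of_poly P ^ j * G) $ (t + j))"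
proof -
  have support: "{j. gexp_term P G j (int t) \<noteq> 0} \<subseteq> {..J}"
    using gexp_term_eq_0[of "int t"] assms by (force simp: not_le)
  have "gexp_avg P G $ t = (\<Sum>j | gexp_term P G j (int t) \<noteq> 0. gexp_term P G j (int t))"
    by (simp add: gexp_avg_def gexp_coeff_def)
  also have "\<dots> = (\<Sum>j\<le>J. gexp_term P G j (int t))"
    by (rule sum.mono_neutral_left) (use support in auto)
  finally show ?thesis
    unfolding gexp_term_def by (simp add: nat_add_distrib)
qed

lemma gexp_avg_nth:
  "gexp_avg P G $ t = (\<Sum>j\<le>2*t. \<i>^j / fact j * gauss (fps_of_poly P ^ j * G) $ (t + j))"
  by (rule gexp_avg_nth_eq_sum) simp

lemma gexp_avg_add: "gexp_avg P (F + G) = gexp_avg P F + gexp_avg P G"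
  by (rule fps_ext) (simp add: gexp_avg_nth distrib_left gauss_add sum.distrib del: gauss_nth)

lemma gexp_avg_minus: "gexp_avg P (- F) = - gexp_avg P F"
  by (rule fps_ext) (simp add: gexp_avg_nth gauss_minus sum_negf del: gauss_nth)

lemma gexp_avg_diff: "gexp_avg P (F - G) = gexp_avg P F - gexp_avg P G"
  using gexp_avg_add[of F "- G"] by (simp add: gexp_avg_minus)

lemma gexp_avg_const_mult: "gexp_avg P (fps_const c * F) = fps_const c * gexp_avg P F"
  by (rule fps_ext)
    (simp add: gexp_avg_nth gauss_const_mult sum_distrib_left mult.left_commute del: gauss_nth)

lemma gexp_avg_zero: "gexp_avg P 0 = 0"
  using gexp_avg_minus[of 0] by simp

lemma gexp_avg_one_nth_0: "gexp_avg P 1 $ 0 = 1"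
  by (simp add: gexp_avg_nth)

lemma gexp_avg_nth_eq_0_below:
  assumes "\<forall>n\<le>6*t. G $ n = 0"
  shows "gexp_avg P G $ t = 0"
  unfolding gexp_avg_nth
proof (intro sum.neutral ballI)
  fix j
  show "\<i>^j / fact j * gauss (fps_of_poly P ^ j * G) $ (t + j) = 0"
    using gauss_power_mult_nth_eq_0[of "Suc (6*t)" G "t + j" j] assms
    by (simp add: less_Suc_eq_le del: gauss_nth)
qed

lemma gexp_avg_fps_X_mult_nth_Suc:
  "gexp_avg P (fps_X * h) $ Suc t
     = \<i> * gexp_avg P (fps_deriv h) $ t - gexp_avg P (fps_of_poly (pderiv P) * h) $ Suc t"
proof -
  define Pf where "Pf = fps_of_poly P"
  define Pd where "Pd = fps_of_poly (pderiv P)"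
  define c :: "nat \<Rightarrow> complex" where "c j = \<i>^j / fact j" for j
  define K where "K = Suc (2*t)"
  have nth: "gexp_avg P G $ u = (\<Sum>j\<le>Suc K. c j * gauss (Pf ^ j * G) $ (u + j))"
    if "u \<le> Suc t" for u G
    unfolding c_def Pf_def by (rule gexp_avg_nth_eq_sum) (use that in \<open>simp add: K_def\<close>)
  \<comment> \<open>differentiating \<open>e^(iP/\<hbar>)\<close> produces \<open>-P'\<close>: shift the index \<open>j\<close> by one\<close>
  have "\<i> * (\<Sum>j\<le>Suc K. c j * of_nat j * gauss (Pf ^ (j - 1) * (Pd * h)) $ (t + j))
      = - (\<Sum>j\<le>K. c j * gauss (Pf ^ j * (Pd * h)) $ (Suc t + j))"
    unfolding c_def by (rule trans[OF sum_i_power_fact_shift]) (simp del: gauss_nth)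
  also have "\<dots> = - gexp_avg P (Pd * h) $ Suc t"
  proof -
    have "gauss (Pf ^ Suc K * (Pd * h)) $ (Suc t + Suc K) = 0"
      unfolding Pf_def Pd_def
      by (rule gauss_power_mult_nth_eq_0[of 2])
        (use fps_mult_nth_eq_0_below[OF fps_of_poly_pderiv_nth_eq_0_below_2, of 0] in
          \<open>auto simp: K_def\<close>)
    then show ?thesis by (simp add: nth del: gauss_nth)
  qed
  finally have Pd_part:
    "\<i> * (\<Sum>j\<le>Suc K. c j * of_nat j * gauss (Pf ^ (j - 1) * (Pd * h)) $ (t + j))
       = - gexp_avg P (Pd * h) $ Suc t" .
  have "gexp_avg P (fps_X * h) $ Suc t = (\<Sum>j\<le>Suc K. c j * gauss (Pf ^ j * (fps_X * h)) $ (Suc t + j))"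
    by (rule nth) simp
  also have "\<dots> = \<i> * (\<Sum>j\<le>Suc K. c j * of_nat j * gauss (Pf ^ (j - 1) * (Pd * h)) $ (t + j))
      + \<i> * (\<Sum>j\<le>Suc K. c j * gauss (Pf ^ j * fps_deriv h) $ (t + j))"
  proof -
    have "c j * gauss (Pf ^ j * (fps_X * h)) $ (Suc t + j)
        = \<i> * (c j * of_nat j * gauss (Pf ^ (j - 1) * (Pd * h)) $ (t + j))
          + \<i> * (c j * gauss (Pf ^ j * fps_deriv h) $ (t + j))" for j
      using gauss_power_mult_fps_X_mult_Suc[of Pf j h "t + j"]
      by (simp add: Pd_def Pf_def fps_of_poly_pderiv algebra_simps del: gauss_nth)
    then show ?thesis by (simp only: sum.distrib sum_distrib_left)
  qed
  also have "(\<Sum>j\<le>Suc K. c j * gauss (Pf ^ j * fps_deriv h) $ (t + j)) = gexp_avg P (fps_deriv h) $ t"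
    by (rule nth[symmetric]) simp
  finally have "gexp_avg P (fps_X * h) $ Suc t
      = - gexp_avg P (Pd * h) $ Suc t + \<i> * gexp_avg P (fps_deriv h) $ t"
    unfolding Pd_part .
  then show ?thesis by (simp add: Pd_def)
qed

lemma gexp_avg_schwinger_dyson:
  "gexp_avg P ((fps_X + fps_of_poly (pderiv P)) * h) = fps_const \<i> * fps_X * gexp_avg P (fps_deriv h)"
proof (rule fps_ext)
  fix t
  show "gexp_avg P ((fps_X + fps_of_poly (pderiv P)) * h) $ t
      = (fps_const \<i> * fps_X * gexp_avg P (fps_deriv h)) $ t"
  proof (cases t)
    case 0
    then show ?thesis using fps_of_poly_pderiv_nth_eq_0_below_2 by (simp add: gexp_avg_nth)
  next
    case (Suc t')
    then show ?thesis
      by (simp add: distrib_right gexp_avg_add gexp_avg_fps_X_mult_nth_Suc mult.assoc)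
  qed
qed

lemma hbar_avg_add: "hbar_avg P (F + G) = hbar_avg P F + hbar_avg P G"
  by (rule fps_ext) (simp add: hbar_avg_nth hbar_coeff_add gexp_avg_add sum.distrib)

lemma hbar_avg_xser: "hbar_avg P (xser Ob) = gexp_avg P Ob"
proof (rule fps_ext)
  fix m
  have "hbar_avg P (xser Ob) $ m = (\<Sum>s\<le>m. if s = 0 then gexp_avg P Ob $ m else 0)"
    unfolding hbar_avg_nth hbar_coeff_xser by (intro sum.cong) (auto simp: gexp_avg_zero)
  then show "hbar_avg P (xser Ob) $ m = gexp_avg P Ob $ m" by simp
qed

lemma hbar_avg_const: "hbar_avg P (fps_const c) = c * gexp_avg P 1"
proof (rule fps_ext)
  fix m
  have "hbar_avg P (fps_const c) $ m = (\<Sum>s\<le>m. c $ s * gexp_avg P 1 $ (m - s))"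
    unfolding hbar_avg_nth hbar_coeff_const using gexp_avg_const_mult[of _ 1] by simp
  then show "hbar_avg P (fps_const c) $ m = (c * gexp_avg P 1) $ m"
    by (simp add: fps_mult_nth atLeast0AtMost)
qed

lemma hbar_avg_nth_eq_0_if_weight_ge:
  assumes "weight_ge N F" "6*m < N"
  shows "hbar_avg P F $ m = 0"
  unfolding hbar_avg_nth
proof (intro sum.neutral ballI)
  fix s assume "s \<in> {..m}"
  then show "gexp_avg P (hbar_coeff F s) $ (m - s) = 0"
    by (intro gexp_avg_nth_eq_0_below) (use assms in \<open>auto simp: weight_ge_def\<close>)
qed

lemma hbar_avg_Qhbar_odd: "hbar_avg P (Qhbar_odd P g) = 0"
proof (rule fps_ext)
  fix m
  define f where "f s t = \<i> * gexp_avg P (fps_deriv (hbar_coeff g s)) $ t" for s t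
  have "hbar_coeff (Qhbar_odd P g) s = (fps_X + fps_of_poly (pderiv P)) * hbar_coeff g s
       - (if s = 0 then 0 else fps_const \<i> * fps_deriv (hbar_coeff g (s - 1)))" for s
    by (simp add: Qhbar_odd_def hbar_coeff_diff hbar_coeff_add distrib_right hbar_coeff_fps_X_mult
        hbar_coeff_xpoly_mult hbar_coeff_ihbar_mult hbar_coeff_deriv)
  then have "gexp_avg P (hbar_coeff (Qhbar_odd P g) s) $ (m - s) =
     (if m - s = 0 then 0 else f s (m - s - 1)) - (if s = 0 then 0 else f (s - 1) (m - s))" for s
    by (simp add: gexp_avg_diff gexp_avg_schwinger_dyson gexp_avg_const_mult gexp_avg_zero
        f_def mult.assoc fps_X_mult_nth)
  then show "hbar_avg P (Qhbar_odd P g) $ m = 0 $ m"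
    unfolding hbar_avg_nth using sum_atMost_antidiagonal_shift[of m f] by simp
qed

lemma hbar_avg_mdK_even: "hbar_avg P a = a $ 0 * gexp_avg P 1 + hbar_avg P (mdK_even P a)"
  by (subst even_decomposition[of a P]) (simp add: hbar_avg_add hbar_avg_const hbar_avg_Qhbar_odd)

lemma hbar_avg_mdK_even_power:
  "hbar_avg P a = (\<Sum>k<N. (mdK_even P ^^ k) a $ 0) * gexp_avg P 1 + hbar_avg P ((mdK_even P ^^ N) a)"
proof (induction N)
  case (Suc N)
  then show ?case
    using hbar_avg_mdK_even[of "(mdK_even P ^^ N) a"] by (simp add: distrib_right)
qed simp

lemma pint_series_sum: "fsum1 (pint_series P (xser Ob, 0)) = gexp_avg P Ob / gexp_avg P 1"
proof -
  define a where "a = xser Ob"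
  define p where "p = fsum1 (pint_series P (xser Ob, 0))"
  have p_nth: "p $ q = (\<Sum>k<N. (mdK_even P ^^ k) a $ 0 $ q)" if "3*q < N" for q N
  proof -
    have "\<forall>k\<ge>N. pint_series P (xser Ob, 0) k $ q = 0"
      using weight_ge_mdK_even_power[of _ a] that by (auto simp: pint_series_eq a_def weight_ge_def)
    then show ?thesis unfolding p_def by (simp add: fsum1_nth_eq_sum pint_series_eq a_def)
  qed
  have factor: "gexp_avg P Ob = p * gexp_avg P 1"
  proof (rule fps_ext)
    fix m
    define N where "N = Suc (6*m)"
    have "gexp_avg P Ob $ m = hbar_avg P a $ m" by (simp add: a_def hbar_avg_xser)
    also have "\<dots> = ((\<Sum>k<N. (mdK_even P ^^ k) a $ 0) * gexp_avg P 1) $ m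
                    + hbar_avg P ((mdK_even P ^^ N) a) $ m"
      by (subst hbar_avg_mdK_even_power[of a N]) simp
    also have "hbar_avg P ((mdK_even P ^^ N) a) $ m = 0"
      by (rule hbar_avg_nth_eq_0_if_weight_ge[OF weight_ge_mdK_even_power]) (simp add: N_def)
    also have "((\<Sum>k<N. (mdK_even P ^^ k) a $ 0) * gexp_avg P 1) $ m = (p * gexp_avg P 1) $ m"
    proof (rule fps_mult_nth_cong_initial, intro allI impI)
      fix i assume "i \<le> m"
      then have "3*i < N" by (simp add: N_def)
      then show "(\<Sum>k<N. (mdK_even P ^^ k) a $ 0) $ i = p $ i"
        by (simp only: fps_sum_nth p_nth)
    qed
    finally show "gexp_avg P Ob $ m = (p * gexp_avg P 1) $ m" by simp
  qed
  have "gexp_avg P 1 \<noteq> 0"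
    using gexp_avg_one_nth_0 by auto
  then show ?thesis using factor by (simp add: p_def)
qed

section \<open>The classical limit\<close>

lemma mod_hbar_Kint_series_sum_mult_dS:
  "mod_hbar (snd (sf_sum (Kint_series P (xser Ob, 0)))) * (fps_X + fps_of_poly (pderiv P))
     = Ob - fps_const (Ob $ 0)"
proof (rule fps_ext)
  fix n
  define a where "a = xser Ob"
  define Pd where "Pd = fps_of_poly (pderiv P)"
  define u where "u k = hbar_coeff ((mdK_even P ^^ k) a) 0" for k
  define Y where "Y = mod_hbar (snd (sf_sum (Kint_series P (xser Ob, 0))))"
  have u_0: "u 0 = Ob" by (simp add: u_def a_def hbar_coeff_xser)
  have u_Suc: "u (Suc k) = - (Pd * fps_shift 1 (u k))" for k
    by (simp add: u_def hbar_coeff_mdK_even Pd_def)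
  have u_nth: "u k $ n = 0" if "n < k" for k n
    using weight_ge_mdK_even_power[of k a] that by (simp add: u_def weight_ge_def)
  have Pd_0: "Pd $ 0 = 0" using fps_of_poly_pderiv_nth_eq_0_below_2 by (simp add: Pd_def)
  have Y_nth: "Y $ i = (\<Sum>k\<le>N. fps_shift 1 (u k)) $ i" if "i < N" for i N
  proof -
    have "Y $ i = fsum2 (\<lambda>k. fps_shift 1 ((mdK_even P ^^ k) a)) $ i $ 0"
      by (simp add: Y_def sf_sum_def Kint_series_eq mod_hbar_def a_def)
    also have "\<dots> = (\<Sum>k<Suc N. fps_shift 1 ((mdK_even P ^^ k) a) $ i $ 0)"
      by (rule fsum2_nth_eq_sum)
        (use weight_ge_mdK_even_power[of _ a] that in \<open>auto simp: weight_ge_def\<close>)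
    finally show ?thesis by (simp add: u_def fps_sum_nth lessThan_Suc_atMost)
  qed
  have "(Y * (fps_X + Pd)) $ n = ((\<Sum>k\<le>Suc n. fps_shift 1 (u k)) * (fps_X + Pd)) $ n"
    using Y_nth[of _ "Suc n"] by (intro fps_mult_nth_cong_initial) (simp del: sum.atMost_Suc)
  also have "\<dots> = (Ob - fps_const (Ob $ 0)) $ n"
    using fps_shift_sum_mult_telescope[of Pd u "Suc n", OF Pd_0 u_Suc] u_0 u_nth[of n "Suc (Suc n)"]
    by simp
  finally show "(Y * (fps_X + fps_of_poly (pderiv P))) $ n = (Ob - fps_const (Ob $ 0)) $ n"
    by (simp only: Pd_def)
qed

lemma mod_hbar_Kint_series_sum:
  "mod_hbar (snd (sf_sum (Kint_series P (xser Ob, 0))))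
     = (Ob - fps_const (Ob $ 0)) / fps_of_poly ([:0, 1:] + pderiv P)"
proof -
  have "fps_of_poly ([:0, 1:] + pderiv P) = fps_X + fps_of_poly (pderiv P)"
    by (simp add: fps_of_poly_add fps_of_poly_pCons)
  moreover have "fps_X + fps_of_poly (pderiv P) \<noteq> 0"
    using fps_of_poly_pderiv_nth_eq_0_below_2 by (auto simp: fps_eq_iff intro!: exI[of _ 1])
  ultimately show ?thesis
    by (metis mod_hbar_Kint_series_sum_mult_dS nonzero_mult_div_cancel_right)
qed

end

theorem mainTheorem10:
  fixes P :: "complex poly"
  assumes "\<forall>k<3. coeff P k = 0"
  shows
   "(\<forall>c. sf_summable (iint_series P c) \<and> sf_sum (iint_series P c) = iop c)
    \<and> (\<forall>v. summable1 (pint_series P v))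
    \<and> (\<forall>v. sf_summable (Kint_series P v))
    \<and> (\<forall>Ob. gexp_summable P Ob \<and> (\<forall>m<0. gexp_coeff P Ob m = 0))
    \<and> (\<forall>Ob. fsum1 (pint_series P (xser Ob, 0)) = gexp_avg P Ob / gexp_avg P 1)
    \<and> (\<forall>f. sf_sum (Kint_series P (0, f)) = (0, 0))
    \<and> (\<forall>Ob. mod_hbar (fst (sf_sum (Kint_series P (xser Ob, 0)))) = 0
          \<and> mod_hbar (snd (sf_sum (Kint_series P (xser Ob, 0))))
              = (Ob - fps_const (Ob $ 0)) / fps_of_poly ([:0, 1:] + pderiv P))"
  using iint_series_sum pint_series_summable[OF assms] Kint_series_summable[OF assms]
    gexp_summable_no_negative_powers[OF assms] pint_series_sum[OF assms] Kint_series_sum_odd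
    mod_hbar_fst_Kint_series_sum mod_hbar_Kint_series_sum[OF assms]
  by blast

end
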